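(* Consider the network and loss $\mathcal{L}$ from the context. If $\mathbf{P}\in\mathbb{R}^D$ is such that there exist $i\in I$ and $k\in K$ with $\rho(\mathbf{w}_i\cdot\mathbf{x}_k)\ne0$, then $\mathbf{P}$ is not a local maximum of $\mathcal{L}$.
   Context: Fix an integer $d>1$, finite index sets $I$ (hidden neurons), $J$ (output neurons), $K$ (samples), reals $\alpha^+\neq\alpha^-$, and $\rho(z)=\alpha^+z$ for $z\ge0$, $\rho(z)=\alpha^-z$ for $z<0$ (componentwise). Parameters $\mathbf{P}=(W,H)\in\mathbb{R}^D$, $D=|J||I|+|I|d$, with $W\in\mathbb{R}^{|I|\times d}$ having rows $\mathbf{w}_i$ and $H=(h_{ji})\in\mathbb{R}^{|J|\times|I|}$; output $\hat{\mathbf{y}}(\mathbf{P};\mathbf{x})=H\rho(W\mathbf{x})$; training data $\mathbf{x}_k\in\mathbb{R}^d$, $\mathbf{y}_k\in\mathbb{R}^{|J|}$; loss $\mathcal{L}(\mathbf{P})=\frac12\sum_{k\in K}\|\hat{\mathbf{y}}(\mathbf{P};\mathbf{x}_k)-\mathbf{y}_k\|^2$. *)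

theory Defs
  imports "HOL-Analysis.Analysis"
begin

definition act :: "real \<Rightarrow> real \<Rightarrow> real \<Rightarrow> real" where
  "act ap am z = (if z \<ge> 0 then ap * z else am * z)"

text \<open>Network output: yhat(P; x) = H rho(W x), with W rows w_i and H = (h_ji).
  Parameters P = (W, H) \<in> (real^'d^'i) \<times> (real^'i^'j), which is R^D with its Euclidean topology.\<close>
definition net_out ::
  "real \<Rightarrow> real \<Rightarrow> (real^'d^'i) \<times> (real^'i^'j) \<Rightarrow> real^'d \<Rightarrow> real^'j" where
  "net_out ap am P x = (\<chi> j. \<Sum>i\<in>UNIV. (snd P $ j $ i) * act ap am ((fst P $ i) \<bullet> x))"

definition loss ::
  "real \<Rightarrow> real \<Rightarrow> ('k \<Rightarrow> real^'d) \<Rightarrow> ('k \<Rightarrow> real^'j)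
     \<Rightarrow> (real^'d^'i) \<times> (real^'i^'j) \<Rightarrow> real" where
  "loss ap am X Y P = (1/2) * (\<Sum>k\<in>UNIV. (norm (net_out ap am P (X k) - Y k))^2)"

definition local_max :: "('a::metric_space \<Rightarrow> real) \<Rightarrow> 'a \<Rightarrow> bool" where
  "local_max f p \<longleftrightarrow> (\<exists>e>0. \<forall>q. dist q p < e \<longrightarrow> f q \<le> f p)"

end

theory Submission
  imports Defs
begin

text \<open>The network output is linear in the output weights H, so along a line
  P + t (0, V) the loss is a quadratic polynomial in t whose leading coefficient
  is half the squared output of the network (W, V) over the samples. Taking for V
  the matrix that reads off only a neuron i with some nonzero activation makes this
  coefficient positive, and a function that grows quadratically in both directions
  along a line has no local maximum on it.\<close>

lemma not_local_max_if_quadratic_along_line: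
  fixes f :: "'a::real_normed_vector \<Rightarrow> real"
  assumes quadratic: "\<And>t. f (p + t *\<^sub>R v) = f p + b * t + c * t\<^sup>2"
    and "c > 0"
  shows "\<not> local_max f p"
proof
  assume "local_max f p"
  then obtain e where "e > 0" and max: "\<And>q. dist q p < e \<Longrightarrow> f q \<le> f p"
    unfolding local_max_def by blast
  have "norm v + 1 > 0" by (simp add: add_nonneg_pos)
  define t where "t = e / 2 / (norm v + 1)"
  have "t > 0"
    unfolding t_def using \<open>e > 0\<close> \<open>norm v + 1 > 0\<close> by simp
  have "t * norm v < e"
  proof -
    have "t * norm v \<le> t * (norm v + 1)" using \<open>t > 0\<close> by simp
    also have "\<dots> = e / 2" unfolding t_def using \<open>norm v + 1 > 0\<close> by (simp add: field_simps)
    finally show ?thesis using \<open>e > 0\<close> by linarith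
  qed
  then have near: "f (p + s *\<^sub>R v) \<le> f p" if "\<bar>s\<bar> = t" for s
    using that by (intro max) (simp add: dist_norm)
  have "b * t + c * t\<^sup>2 \<le> 0"
    using near[of t] quadratic[of t] \<open>t > 0\<close> by simp
  moreover have "- (b * t) + c * t\<^sup>2 \<le> 0"
    using near[of "-t"] quadratic[of "-t"] \<open>t > 0\<close> by simp
  ultimately have "c * t\<^sup>2 \<le> 0" by linarith
  with \<open>c > 0\<close> \<open>t > 0\<close> show False
    by (simp add: mult_le_0_iff)
qed

lemma net_out_add_scaled_output_weights:
  "net_out ap am (W, H + t *\<^sub>R V) x = net_out ap am (W, H) x + t *\<^sub>R net_out ap am (W, V) x"
  unfolding net_out_def
  by (simp add: vec_eq_iff sum.distrib sum_distrib_left algebra_simps)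

lemma power2_norm_add_scaled:
  fixes u v :: "'a::real_inner"
  shows "(norm (u + t *\<^sub>R v))\<^sup>2 = (norm u)\<^sup>2 + 2 * t * (u \<bullet> v) + t\<^sup>2 * (norm v)\<^sup>2"
  unfolding power2_norm_eq_inner
  by (simp add: inner_add_left inner_add_right inner_commute power2_eq_square algebra_simps)

lemma loss_along_output_weights:
  fixes X :: "'k::finite \<Rightarrow> real^'d" and Y :: "'k \<Rightarrow> real^'j"
  shows "loss ap am X Y (W, H + t *\<^sub>R V) = loss ap am X Y (W, H)
    + t * (\<Sum>k\<in>UNIV. (net_out ap am (W, H) (X k) - Y k) \<bullet> net_out ap am (W, V) (X k))
    + t\<^sup>2 / 2 * (\<Sum>k\<in>UNIV. (norm (net_out ap am (W, V) (X k)))\<^sup>2)"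
proof -
  define r where "r k = net_out ap am (W, H) (X k) - Y k" for k
  define b where "b k = net_out ap am (W, V) (X k)" for k
  have "loss ap am X Y (W, H + t *\<^sub>R V) = 1/2 * (\<Sum>k\<in>UNIV. (norm (r k + t *\<^sub>R b k))\<^sup>2)"
    unfolding loss_def r_def b_def net_out_add_scaled_output_weights by (simp add: algebra_simps)
  also have "\<dots> = 1/2 * (\<Sum>k\<in>UNIV. (norm (r k))\<^sup>2) + t * (\<Sum>k\<in>UNIV. r k \<bullet> b k)
      + t\<^sup>2 / 2 * (\<Sum>k\<in>UNIV. (norm (b k))\<^sup>2)"
    unfolding power2_norm_add_scaled by (simp add: sum.distrib sum_distrib_left algebra_simps)
  finally show ?thesis
    unfolding loss_def r_def b_def by simp
qed

lemma net_out_single_hidden_neuron: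
  "net_out ap am (W, \<chi> j i. if i = i0 then 1 else 0) x = (\<chi> j. act ap am (W $ i0 \<bullet> x))"
  unfolding net_out_def by (simp add: vec_eq_iff of_bool_def [symmetric])

theorem theorem2:
  fixes ap am :: real
    and X :: "'k::finite \<Rightarrow> real^'d::finite"
    and Y :: "'k \<Rightarrow> real^'j::finite"
    and P :: "(real^'d^'i::finite) \<times> (real^'i^'j)"
  assumes "CARD('d) > 1"
    and "ap \<noteq> am"
    and "\<exists>i k. act ap am ((fst P $ i) \<bullet> X k) \<noteq> 0"
  shows "\<not> local_max (loss ap am X Y) P"
proof -
  obtain W H where P: "P = (W, H)" by fastforce
  obtain i0 k0 where active: "act ap am (W $ i0 \<bullet> X k0) \<noteq> 0"
    using assms(3) P by auto
  define V :: "real^'i^'j" where "V = (\<chi> j i. if i = i0 then 1 else 0)"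
  define c where "c = (\<Sum>k\<in>UNIV. (norm (net_out ap am (W, V) (X k)))\<^sup>2) / 2"
  have "net_out ap am (W, V) (X k0) \<noteq> 0"
    using active by (simp add: V_def net_out_single_hidden_neuron vec_eq_iff)
  then have "0 < (norm (net_out ap am (W, V) (X k0)))\<^sup>2" by simp
  also have "\<dots> \<le> (\<Sum>k\<in>UNIV. (norm (net_out ap am (W, V) (X k)))\<^sup>2)"
    by (rule member_le_sum) auto
  finally have "c > 0" unfolding c_def by simp
  moreover have "loss ap am X Y (P + t *\<^sub>R (0, V)) = loss ap am X Y P
      + (\<Sum>k\<in>UNIV. (net_out ap am (W, H) (X k) - Y k) \<bullet> net_out ap am (W, V) (X k)) * t
      + c * t\<^sup>2" for t
    unfolding P c_def by (simp add: loss_along_output_weights algebra_simps)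
  ultimately show ?thesis
    by (intro not_local_max_if_quadratic_along_line)
qed

end
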